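(* Let $p>2$ be an integer and $n=2p$. Let $S=S_1\cup S_2\subseteq U_{6n}$ where $S_1=(\langle a^4\rangle\setminus\{1\})\cup\{a^{2l}b,\ a^{-2l}b^2\mid 1\le l\le n-1\}$ and $S_2=\{a^{2r+1}b\mid 0\le r\le n-1\}$. Then $\mathrm{Cay}(U_{6n},S)$ is a connected integral graph, and its spectrum (eigenvalues with multiplicities) is $\{[-3]^{4p-4},[0]^{8p-8},[p]^6,[p-3]^2,[3p-3]^1,[-3p]^2,[7p-3]^1\}$.
   Context: For an integer $n\ge1$, $U_{6n}=\langle a,b\mid a^{2n}=b^3=1,\ a^{-1}ba=b^{-1}\rangle$, a group of order $6n$. For a group $G$ and $S\subseteq G$ with $1\notin S=S^{-1}$, the Cayley graph $\mathrm{Cay}(G,S)$ has vertex set $G$ and edges $\{g,sg\}$ for $g\in G,s\in S$. A graph is integral if all eigenvalues of its adjacency matrix are integers. $[\lambda]^m$ denotes eigenvalue $\lambda$ with multiplicity $m$. *)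

theory Defs
  imports "HOL-Algebra.Algebra" "Jordan_Normal_Form.Char_Poly"
begin

text \<open>Concrete model of U_{6n} = <a,b | a^(2n) = b^3 = 1, a^(-1) b a = b^(-1)>.
  The pair (i,j) with i < 2n, j < 3 stands for the normal form a^i b^j.
  Since b^j a^k = a^k b^(j (-1)^k), we have
  (a^i b^j)(a^k b^l) = a^(i+k) b^(j (-1)^k + l).\<close>

definition U_mult :: "nat \<Rightarrow> nat \<times> nat \<Rightarrow> nat \<times> nat \<Rightarrow> nat \<times> nat" where
  "U_mult n x y = ((fst x + fst y) mod (2 * n),
      (if even (fst y) then snd x + snd y else 2 * snd x + snd y) mod 3)"

definition U6n :: "nat \<Rightarrow> (nat \<times> nat) monoid" where
  "U6n n = \<lparr> partial_object.carrier = {x. fst x < 2 * n \<and> snd x < 3}, monoid.mult = U_mult n, monoid.one = (0, 0) \<rparr>"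

definition gen_a :: "nat \<times> nat" where "gen_a = (1, 0)"
definition gen_b :: "nat \<times> nat" where "gen_b = (0, 1)"

definition cay_adj :: "('a, 'b) monoid_scheme \<Rightarrow> 'a set \<Rightarrow> 'a \<Rightarrow> 'a \<Rightarrow> bool" where
  "cay_adj G S g h \<longleftrightarrow> g \<in> carrier G \<and> h \<in> carrier G \<and> (\<exists>s\<in>S. h = s \<otimes>\<^bsub>G\<^esub> g)"

definition cay_connected :: "('a, 'b) monoid_scheme \<Rightarrow> 'a set \<Rightarrow> bool" where
  "cay_connected G S \<longleftrightarrow>
     (\<forall>g\<in>carrier G. \<forall>h\<in>carrier G. (g, h) \<in> {(x, y). cay_adj G S x y}\<^sup>*)"

text \<open>Adjacency matrix of Cay(G,S) with respect to an enumeration e of the vertices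
  by 0, ..., N-1 (the spectrum does not depend on the enumeration).\<close>

definition cay_adj_mat :: "('a, 'b) monoid_scheme \<Rightarrow> 'a set \<Rightarrow> nat \<Rightarrow> (nat \<Rightarrow> 'a) \<Rightarrow> complex mat" where
  "cay_adj_mat G S N e = mat N N (\<lambda>(i, j). if cay_adj G S (e i) (e j) then 1 else 0)"

definition integral_mat :: "complex mat \<Rightarrow> bool" where
  "integral_mat A \<longleftrightarrow> (\<forall>x. eigenvalue A x \<longrightarrow> x \<in> \<int>)"

definition S1 :: "nat \<Rightarrow> (nat \<times> nat) set" where
  "S1 n = (generate (U6n n) {gen_a [^]\<^bsub>U6n n\<^esub> (4::nat)} - {\<one>\<^bsub>U6n n\<^esub>})
       \<union> {gen_a [^]\<^bsub>U6n n\<^esub> (2 * l) \<otimes>\<^bsub>U6n n\<^esub> gen_b | l. 1 \<le> l \<and> l \<le> n - 1}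
       \<union> {gen_a [^]\<^bsub>U6n n\<^esub> (- (2 * int l)) \<otimes>\<^bsub>U6n n\<^esub> (gen_b [^]\<^bsub>U6n n\<^esub> (2::nat))
            | l. 1 \<le> l \<and> l \<le> n - 1}"

definition S2 :: "nat \<Rightarrow> (nat \<times> nat) set" where
  "S2 n = {gen_a [^]\<^bsub>U6n n\<^esub> (2 * r + 1) \<otimes>\<^bsub>U6n n\<^esub> gen_b | r. r \<le> n - 1}"

end

theory Submission
  imports Defs
begin

text \<open>Write a vertex \<open>a^i b^j\<close> with \<open>i = 4q + r\<close>, \<open>q < p\<close>, \<open>r < 4\<close>. Since 4 divides \<open>2n\<close>,
  whether two vertices are adjacent depends only on whether their \<open>a\<close>-exponents differ and on
  their cells \<open>(r, j)\<close>. Hence the adjacency matrix is \<open>J\<^sub>p \<otimes> M - I\<^sub>p \<otimes> (I\<^sub>4 \<otimes> J\<^sub>3)\<close> for a fixed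
  12 \<open>\<times>\<close> 12 matrix \<open>M\<close> that contains \<open>I\<^sub>4 \<otimes> J\<^sub>3\<close>. Tensoring an orthogonal eigenbasis of \<open>J\<^sub>p\<close>
  (eigenvalues \<open>p\<close> and 0) with a common orthogonal eigenbasis of \<open>M\<close> and \<open>I\<^sub>4 \<otimes> J\<^sub>3\<close>
  (eigenvalues \<open>\<tau>\<close> and \<open>\<sigma>\<close>) gives \<open>12p\<close> orthogonal integer eigenvectors with eigenvalues
  \<open>p\<tau> - \<sigma>\<close> and \<open>-\<sigma>\<close>, so the adjacency matrix is diagonalisable over the integers, which gives
  both integrality and the characteristic polynomial. Connectedness comes from explicit paths of
  length at most three starting at the identity.\<close>

section \<open>The group \<open>U\<^sub>6\<^sub>n\<close> and the connection set\<close>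

lemma U6n_carrier: "carrier (U6n n) = {x. fst x < 2 * n \<and> snd x < 3}"
  by (simp add: U6n_def)

lemma U6n_mult [simp]: "x \<otimes>\<^bsub>U6n n\<^esub> y = U_mult n x y"
  by (simp add: U6n_def)

lemma U6n_one [simp]: "\<one>\<^bsub>U6n n\<^esub> = (0, 0)"
  by (simp add: U6n_def)

lemma gen_a_pow: "0 < n \<Longrightarrow> gen_a [^]\<^bsub>U6n n\<^esub> (m::nat) = (m mod (2 * n), 0)"
  by (induction m) (simp_all add: U_mult_def gen_a_def mod_Suc_eq)

lemma gen_b_pow_2: "gen_b [^]\<^bsub>U6n n\<^esub> (2::nat) = (0, 2)"
  by (simp add: numeral_2_eq_2 U_mult_def gen_b_def)

lemma U6n_inv_a_power:
  assumes "x < 2 * n"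
  shows "inv\<^bsub>U6n n\<^esub> (x, 0) = ((2 * n - x) mod (2 * n), 0)"
  unfolding m_inv_def
proof (rule the_equality)
  show "((2 * n - x) mod (2 * n), 0) \<in> carrier (U6n n) \<and>
      (x, 0) \<otimes>\<^bsub>U6n n\<^esub> ((2 * n - x) mod (2 * n), 0) = \<one>\<^bsub>U6n n\<^esub> \<and>
      ((2 * n - x) mod (2 * n), 0) \<otimes>\<^bsub>U6n n\<^esub> (x, 0) = \<one>\<^bsub>U6n n\<^esub>"
    using assms by (cases "x = 0") (auto simp: U6n_carrier U_mult_def)
next
  fix y assume y: "y \<in> carrier (U6n n) \<and> (x, 0) \<otimes>\<^bsub>U6n n\<^esub> y = \<one>\<^bsub>U6n n\<^esub>
      \<and> y \<otimes>\<^bsub>U6n n\<^esub> (x, 0) = \<one>\<^bsub>U6n n\<^esub>"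
  then have "fst y < 2 * n" "snd y < 3" "(x + fst y) mod (2 * n) = 0" "snd y mod 3 = 0"
    by (auto simp: U6n_carrier U_mult_def split: if_splits)
  then show "y = ((2 * n - x) mod (2 * n), 0)"
    using assms by (cases y) (auto simp: mod_if split: if_splits)
qed

lemma gen_a_int_pow_neg:
  assumes "0 < m" "m < 2 * n"
  shows "gen_a [^]\<^bsub>U6n n\<^esub> (- int m) = (2 * n - m, 0)"
proof -
  have "gen_a [^]\<^bsub>U6n n\<^esub> (- int m) = inv\<^bsub>U6n n\<^esub> (gen_a [^]\<^bsub>U6n n\<^esub> m)"
    using assms by (simp add: int_pow_def2)
  then show ?thesis
    using assms by (simp add: gen_a_pow U6n_inv_a_power)
qed

definition conn_set :: "nat \<Rightarrow> (nat \<times> nat) set" where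
  "conn_set n = {(x, y). x < 2 * n \<and> y < 3 \<and> x \<noteq> 0 \<and>
     (y = 1 \<or> (y = 2 \<and> even x) \<or> (y = 0 \<and> 4 dvd x))}"

lemma generate_gen_a_pow_4:
  assumes "even n" "2 < n"
  shows "generate (U6n n) {gen_a [^]\<^bsub>U6n n\<^esub> (4::nat)} = {(x, 0) | x. x < 2 * n \<and> 4 dvd x}"
proof -
  have a4: "gen_a [^]\<^bsub>U6n n\<^esub> (4::nat) = (4, 0)"
    using assms by (simp add: gen_a_pow)
  have "g \<in> {(x, 0) | x. x < 2 * n \<and> 4 dvd x}" if "g \<in> generate (U6n n) {(4, 0)}" for g
    using that
  proof (induction rule: generate.induct)
    case (inv h)
    then show ?case using assms by (auto simp: U6n_inv_a_power)
  next
    case (eng h1 h2)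
    moreover have "4 dvd (2 * n)" using assms by auto
    ultimately show ?case using assms by (auto simp: U_mult_def intro!: dvd_mod)
  qed (use assms in auto)
  moreover have "((4 * q) mod (2 * n), 0) \<in> generate (U6n n) {(4, 0)}" for q
  proof (induction q)
    case 0
    then show ?case using generate.one[of "U6n n"] by simp
  next
    case (Suc q)
    have "((4 * q) mod (2 * n), 0) \<otimes>\<^bsub>U6n n\<^esub> (4, 0) \<in> generate (U6n n) {(4, 0)}"
      by (rule generate.eng[OF Suc generate.incl]) simp
    then show ?case by (simp add: U_mult_def) (metis mod_add_left_eq add.commute)
  qed
  then have "(x, 0) \<in> generate (U6n n) {(4, 0)}" if "x < 2 * n" "4 dvd x" for x
    using that by (metis dvdE mod_less)
  ultimately show ?thesis unfolding a4 by blast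
qed

lemma S1_Un_S2_eq_images:
  assumes "even n" "2 < n"
  shows "S1 n \<union> S2 n =
    {(x, 0) | x. 0 < x \<and> x < 2 * n \<and> 4 dvd x} \<union> (\<lambda>l. (2 * l, 1)) ` {1..n - 1}
      \<union> (\<lambda>l. (2 * n - 2 * l, 2)) ` {1..n - 1} \<union> (\<lambda>r. (2 * r + 1, 1)) ` {..n - 1}"
proof -
  have A: "generate (U6n n) {gen_a [^]\<^bsub>U6n n\<^esub> (4::nat)} - {\<one>\<^bsub>U6n n\<^esub>}
      = {(x, 0) | x. 0 < x \<and> x < 2 * n \<and> 4 dvd x}"
    using assms by (auto simp: generate_gen_a_pow_4)
  have "gen_a [^]\<^bsub>U6n n\<^esub> (2 * l) \<otimes>\<^bsub>U6n n\<^esub> gen_b = (2 * l, 1)" if "l \<le> n - 1" for l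
    using that assms by (simp add: gen_a_pow gen_b_def U_mult_def)
  then have B: "{gen_a [^]\<^bsub>U6n n\<^esub> (2 * l) \<otimes>\<^bsub>U6n n\<^esub> gen_b | l. 1 \<le> l \<and> l \<le> n - 1}
      = (\<lambda>l. (2 * l, 1)) ` {1..n - 1}"
    by force
  have "gen_a [^]\<^bsub>U6n n\<^esub> (- (2 * int l)) \<otimes>\<^bsub>U6n n\<^esub> (gen_b [^]\<^bsub>U6n n\<^esub> (2::nat))
      = (2 * n - 2 * l, 2)" if "1 \<le> l" "l \<le> n - 1" for l
    using that assms gen_a_int_pow_neg[of "2 * l" n] by (simp add: gen_b_pow_2 U_mult_def)
  then have C: "{gen_a [^]\<^bsub>U6n n\<^esub> (- (2 * int l)) \<otimes>\<^bsub>U6n n\<^esub> (gen_b [^]\<^bsub>U6n n\<^esub> (2::nat))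
        | l. 1 \<le> l \<and> l \<le> n - 1}
      = (\<lambda>l. (2 * n - 2 * l, 2)) ` {1..n - 1}"
    by force
  have "gen_a [^]\<^bsub>U6n n\<^esub> (2 * r + 1) \<otimes>\<^bsub>U6n n\<^esub> gen_b = (2 * r + 1, 1)" if "r \<le> n - 1" for r
    using that assms gen_a_pow[of n "2 * r + 1"] by (simp add: gen_b_def U_mult_def)
  then have D: "S2 n = (\<lambda>r. (2 * r + 1, 1)) ` {..n - 1}"
    unfolding S2_def by force
  show ?thesis
    unfolding S1_def A B C D by blast
qed

lemma conn_set_eq_images:
  assumes "0 < n"
  shows "conn_set n =
    {(x, 0) | x. 0 < x \<and> x < 2 * n \<and> 4 dvd x} \<union> (\<lambda>l. (2 * l, 1)) ` {1..n - 1}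
      \<union> (\<lambda>l. (2 * n - 2 * l, 2)) ` {1..n - 1} \<union> (\<lambda>r. (2 * r + 1, 1)) ` {..n - 1}"
    (is "_ = ?U")
proof
  show "conn_set n \<subseteq> ?U"
  proof
    fix z assume "z \<in> conn_set n"
    then obtain x y where z: "z = (x, y)" "x < 2 * n" "y < 3" "x \<noteq> 0"
      and "y = 1 \<or> (y = 2 \<and> even x) \<or> (y = 0 \<and> 4 dvd x)"
      by (auto simp: conn_set_def)
    then consider "y = 1" "even x" | "y = 1" "odd x" | "y = 2" "even x" | "y = 0" "4 dvd x"
      by blast
    then show "z \<in> ?U"
    proof cases
      case 1 then show ?thesis using z by (auto intro!: image_eqI[of _ _ "x div 2"])
    next
      case 2 then show ?thesis using z by (auto intro!: image_eqI[of _ _ "x div 2"])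
    next
      case 3
      then obtain k where "x = 2 * k" by (blast elim: evenE)
      then show ?thesis using z 3 by (auto intro!: image_eqI[of _ _ "n - k"])
    qed (use z in auto)
  qed
  show "?U \<subseteq> conn_set n"
    using assms by (auto simp: conn_set_def)
qed

lemma S1_Un_S2_eq_conn_set:
  assumes "even n" "2 < n"
  shows "S1 n \<union> S2 n = conn_set n"
  using assms by (simp add: S1_Un_S2_eq_images conn_set_eq_images)

section \<open>Adjacency and connectedness\<close>

text \<open>Whether some \<open>s \<in> conn_set n\<close> satisfies \<open>s a^i b^j = a^k b^l\<close> depends only on
  \<open>(i mod 4, j)\<close>, \<open>(k mod 4, l)\<close> and on \<open>i \<noteq> k\<close>; \<open>cell_adj\<close> is the condition on the residues.\<close>

definition cell_adj :: "nat \<Rightarrow> nat \<Rightarrow> nat \<Rightarrow> nat \<Rightarrow> bool" where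
  "cell_adj r j s l \<longleftrightarrow>
     (if even r = even s then j \<noteq> l \<or> r = s
      else if even r then l = (j + 1) mod 3 else j = (l + 1) mod 3)"

lemma cell_adj_sym: "cell_adj r j s l \<Longrightarrow> cell_adj s l r j"
  unfolding cell_adj_def by (cases "even r"; cases "even s") auto

lemma add_mod_eq_iff:
  fixes x i k N :: nat
  assumes "x < N" "i < N" "k < N"
  shows "(x + i) mod N = k \<longleftrightarrow> x + i = k \<or> x + i = k + N"
  using assms by (auto simp: mod_if)

lemma residues_of_wrapped_sum:
  fixes x i k n :: nat
  assumes "even n" "x + i = k \<or> x + i = k + 2 * n"
  shows "even k \<longleftrightarrow> (even x \<longleftrightarrow> even i)" and "k mod 4 = i mod 4 \<longleftrightarrow> 4 dvd x"
proof -
  obtain m where n: "n = 2 * m"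
    using assms(1) by blast
  show "even k \<longleftrightarrow> (even x \<longleftrightarrow> even i)" "k mod 4 = i mod 4 \<longleftrightarrow> 4 dvd x"
    using assms(2) unfolding n by presburger+
qed

lemma even_mod_4_iff: "even ((a::nat) mod 4) \<longleftrightarrow> even a"
  by presburger

lemma cell_adj_if_conn_set_mult:
  assumes "even n" "i < 2 * n" "j < 3" "k < 2 * n"
    and "(x, y) \<in> conn_set n" "(k, l) = U_mult n (x, y) (i, j)"
  shows "cell_adj (i mod 4) j (k mod 4) l \<and> i \<noteq> k"
proof -
  have x: "x < 2 * n" "x \<noteq> 0" and y: "y = 1 \<or> (y = 2 \<and> even x) \<or> (y = 0 \<and> 4 dvd x)"
    using assms(5) by (auto simp: conn_set_def)
  have k: "x + i = k \<or> x + i = k + 2 * n" and l: "l = (if even i then y + j else 2 * y + j) mod 3"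
    using assms add_mod_eq_iff[OF x(1) assms(2,4)] by (auto simp: U_mult_def)
  have "i \<noteq> k" using k x by auto
  moreover have "y = 0 \<or> y = 1 \<or> y = 2" "j = 0 \<or> j = 1 \<or> j = 2"
    using y assms(3) by auto
  ultimately show ?thesis
    using residues_of_wrapped_sum[OF assms(1) k] y l
    unfolding cell_adj_def even_mod_4_iff by (elim disjE) auto
qed

lemma conn_set_mult_if_cell_adj:
  assumes "even n" "i < 2 * n" "j < 3" "k < 2 * n" "l < 3"
    and "cell_adj (i mod 4) j (k mod 4) l" "i \<noteq> k"
  shows "\<exists>s\<in>conn_set n. (k, l) = U_mult n s (i, j)"
proof -
  define x where "x = (if i \<le> k then k - i else k + 2 * n - i)"
  define y where "y = (if even i then (l + 3 - j) mod 3 else (2 * (l + 3 - j)) mod 3)"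
  have k: "x + i = k \<or> x + i = k + 2 * n" and x: "x < 2 * n" "x \<noteq> 0"
    using assms unfolding x_def by auto
  have j3: "j = 0 \<or> j = 1 \<or> j = 2" and l3: "l = 0 \<or> l = 1 \<or> l = 2"
    using assms by auto
  then have l: "l = (if even i then y + j else 2 * y + j) mod 3"
    unfolding y_def by (elim disjE) auto
  have "y = 1 \<or> (y = 2 \<and> even x) \<or> (y = 0 \<and> 4 dvd x)"
    using residues_of_wrapped_sum[OF assms(1) k] assms(6) j3 l3
    unfolding cell_adj_def y_def even_mod_4_iff by (elim disjE) (auto split: if_splits)
  then have "(x, y) \<in> conn_set n"
    using x unfolding conn_set_def by auto
  moreover have "(k, l) = U_mult n (x, y) (i, j)"
    using k l add_mod_eq_iff[OF x(1) assms(2,4)] by (simp add: U_mult_def)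
  ultimately show ?thesis by blast
qed

lemma cay_adj_conn_set_iff:
  assumes "even n"
  shows "cay_adj (U6n n) (conn_set n) (i, j) (k, l) \<longleftrightarrow>
    i < 2 * n \<and> j < 3 \<and> k < 2 * n \<and> l < 3 \<and> cell_adj (i mod 4) j (k mod 4) l \<and> i \<noteq> k"
proof -
  have "cay_adj (U6n n) (conn_set n) (i, j) (k, l) \<longleftrightarrow>
      i < 2 * n \<and> j < 3 \<and> k < 2 * n \<and> l < 3 \<and> (\<exists>s\<in>conn_set n. (k, l) = U_mult n s (i, j))"
    by (auto simp: cay_adj_def U6n_carrier)
  then show ?thesis
    using cell_adj_if_conn_set_mult[OF assms, of i j k] conn_set_mult_if_cell_adj[OF assms, of i j k l]
    by fast
qed

lemma cay_adj_conn_set_sym: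
  assumes "even n" "cay_adj (U6n n) (conn_set n) g h"
  shows "cay_adj (U6n n) (conn_set n) h g"
  using assms cell_adj_sym by (cases g, cases h) (auto simp: cay_adj_conn_set_iff)

lemma cay_connected_conn_set:
  assumes "even n" "2 < n"
  shows "cay_connected (U6n n) (conn_set n)"
proof -
  let ?E = "{(x, y). cay_adj (U6n n) (conn_set n) x y}"
  have edge: "((i, j), (k, l)) \<in> ?E\<^sup>*"
    if "i < 2 * n" "j < 3" "k < 2 * n" "l < 3" "cell_adj (i mod 4) j (k mod 4) l" "i \<noteq> k"
    for i j k l
    using that assms by (auto simp: cay_adj_conn_set_iff)
  have reach_odd: "((0, 0), (k, l)) \<in> ?E\<^sup>*" if "odd k" "k < 2 * n" "l < 3" for k l
  proof (cases "l = 1")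
    case True
    then show ?thesis using that by (intro edge) (auto simp: cell_adj_def intro: odd_pos)
  next
    case False
    then have "(l + 2) mod 3 \<noteq> 0" "odd (k mod 4)" "l = ((l + 2) mod 3 + 1) mod 3"
      using that by presburger+
    then have "((0, 0), (2, (l + 2) mod 3)) \<in> ?E\<^sup>*" "((2, (l + 2) mod 3), (k, l)) \<in> ?E\<^sup>*"
      using that assms by (auto intro!: edge simp: cell_adj_def)
    then show ?thesis by (rule rtrancl_trans)
  qed
  have reach: "((0, 0), (k, l)) \<in> ?E\<^sup>*" if "k < 2 * n" "l < 3" for k l
  proof (cases "odd k")
    case False
    then have "even (k mod 4)" by presburger
    then have "((0, 0), (1, (l + 1) mod 3)) \<in> ?E\<^sup>*" "((1, (l + 1) mod 3), (k, l)) \<in> ?E\<^sup>*"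
      using False that assms by (auto intro!: reach_odd edge simp: cell_adj_def)
    then show ?thesis by (rule rtrancl_trans)
  qed (use that reach_odd in blast)
  have "sym ?E"
    using cay_adj_conn_set_sym[OF assms(1)] by (auto simp: sym_def)
  then have "(g, h) \<in> ?E\<^sup>*" if "g \<in> carrier (U6n n)" "h \<in> carrier (U6n n)" for g h
    using that reach[of "fst g" "snd g"] reach[of "fst h" "snd h"]
    by (auto simp: U6n_carrier intro: rtrancl_trans dest: symD[OF sym_rtrancl])
  then show ?thesis by (simp add: cay_connected_def)
qed

section \<open>Characteristic polynomials from orthogonal eigenvectors\<close>

text \<open>Orthogonality is taken with respect to the bilinear form \<open>\<Sum> v w\<close>, so the inverse of the
  matrix of eigenvectors can be written down directly.\<close>

lemma char_poly_eq_prod_if_orthogonal_eigvecs: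
  fixes A :: "complex mat" and v :: "nat \<Rightarrow> nat \<Rightarrow> complex" and \<mu> :: "nat \<Rightarrow> complex"
  assumes A: "A \<in> carrier_mat N N"
    and eig: "\<And>b a. b < N \<Longrightarrow> a < N \<Longrightarrow> (\<Sum>a'<N. A $$ (a, a') * v b a') = \<mu> b * v b a"
    and orth: "\<And>b b'. b < N \<Longrightarrow> b' < N \<Longrightarrow> b \<noteq> b' \<Longrightarrow> (\<Sum>a<N. v b a * v b' a) = 0"
    and nondeg: "\<And>b. b < N \<Longrightarrow> (\<Sum>a<N. v b a * v b a) \<noteq> 0"
  shows "char_poly A = (\<Prod>b<N. [:- \<mu> b, 1:])"
proof -
  define P where "P = mat N N (\<lambda>(a, b). v b a)"
  define Q where "Q = mat N N (\<lambda>(b, a). v b a / (\<Sum>a'<N. v b a' * v b a'))"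
  define D where "D = mat_diag N \<mu>"
  have P: "P \<in> carrier_mat N N" and Q: "Q \<in> carrier_mat N N" and D: "D \<in> carrier_mat N N"
    by (simp_all add: P_def Q_def D_def)
  have QP: "Q * P = 1\<^sub>m N"
  proof (rule eq_matI)
    fix b b' assume "b < dim_row (1\<^sub>m N)" "b' < dim_col (1\<^sub>m N)"
    then have "b < N" "b' < N" by auto
    then have "(Q * P) $$ (b, b') = (\<Sum>a<N. v b a * v b' a) / (\<Sum>a<N. v b a * v b a)"
      by (simp add: P_def Q_def scalar_prod_def atLeast0LessThan sum_divide_distrib)
    also have "\<dots> = 1\<^sub>m N $$ (b, b')"
      using \<open>b < N\<close> \<open>b' < N\<close> orth nondeg by auto
    finally show "(Q * P) $$ (b, b') = 1\<^sub>m N $$ (b, b')" .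
  qed (use P Q in auto)
  have PQ: "P * Q = 1\<^sub>m N"
    by (rule mat_mult_left_right_inverse[OF Q P QP])
  have AP: "A * P = P * D"
  proof (rule eq_matI)
    fix a b assume "a < dim_row (P * D)" "b < dim_col (P * D)"
    then have "a < N" "b < N" using P D by auto
    moreover have "(P * D) $$ (a, b) = P $$ (a, b) * \<mu> b"
      using \<open>a < N\<close> \<open>b < N\<close> by (simp add: D_def mat_diag_mult_right[OF P])
    ultimately show "(A * P) $$ (a, b) = (P * D) $$ (a, b)"
      using A eig[of b a] by (simp add: P_def scalar_prod_def atLeast0LessThan mult.commute)
  qed (use A P D in auto)
  have "A = P * D * Q"
    using A P Q by (metis AP PQ assoc_mult_mat right_mult_one_mat)
  then have "similar_mat A D"
    using A P Q D PQ QP by (intro similar_matI[where P = P and Q = Q and n = N]) auto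
  then have "char_poly A = char_poly D"
    by (rule char_poly_similar)
  also have "\<dots> = (\<Prod>a \<leftarrow> diag_mat D. [:- a, 1:])"
    using D by (rule char_poly_upper_triangular) (simp add: upper_triangular_def D_def mat_diag_def)
  also have "diag_mat D = map \<mu> [0..<N]"
    by (simp add: diag_mat_def D_def mat_diag_def)
  finally show ?thesis
    by (simp add: prod.distinct_set_conv_list[symmetric] lessThan_atLeast0)
qed

lemma char_poly_cay_adj_mat_eq_prod:
  fixes v :: "nat \<Rightarrow> 'a \<Rightarrow> int" and \<mu> :: "nat \<Rightarrow> int"
  assumes e: "bij_betw e {..<N} (carrier G)"
    and eig: "\<And>b g. b < N \<Longrightarrow> g \<in> carrier G \<Longrightarrow>
      (\<Sum>h\<in>carrier G. if cay_adj G S g h then v b h else 0) = \<mu> b * v b g"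
    and orth: "\<And>b b'. b < N \<Longrightarrow> b' < N \<Longrightarrow> b \<noteq> b' \<Longrightarrow> (\<Sum>g\<in>carrier G. v b g * v b' g) = 0"
    and nondeg: "\<And>b. b < N \<Longrightarrow> (\<Sum>g\<in>carrier G. v b g * v b g) \<noteq> 0"
  shows "char_poly (cay_adj_mat G S N e) = (\<Prod>b<N. [:- of_int (\<mu> b), 1:])"
proof (rule char_poly_eq_prod_if_orthogonal_eigvecs[where v = "\<lambda>b a. of_int (v b (e a))"])
  have reindex: "(\<Sum>a<N. f (e a)) = (\<Sum>g\<in>carrier G. f g)" for f :: "'a \<Rightarrow> int"
    using sum.reindex_bij_betw[OF e] by simp
  have "e a \<in> carrier G" if "a < N" for a
    using e that by (auto simp: bij_betw_def)
  then have eig': "(\<Sum>a'<N. if cay_adj G S (e a) (e a') then v b (e a') else 0) = \<mu> b * v b (e a)"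
    if "b < N" "a < N" for b a
    using that eig reindex[of "\<lambda>h. if cay_adj G S (e a) h then v b h else 0"] by simp
  show "(\<Sum>a'<N. cay_adj_mat G S N e $$ (a, a') * of_int (v b (e a'))) = of_int (\<mu> b) * of_int (v b (e a))"
    if "b < N" "a < N" for b a
  proof -
    have "(\<Sum>a'<N. cay_adj_mat G S N e $$ (a, a') * of_int (v b (e a')))
        = of_int (\<Sum>a'<N. if cay_adj G S (e a) (e a') then v b (e a') else 0)"
      using that by (auto simp: cay_adj_mat_def of_int_sum intro!: sum.cong)
    then show ?thesis
      using eig'[OF that] by simp
  qed
  show "(\<Sum>a<N. of_int (v b (e a)) * of_int (v b' (e a))) = (0 :: complex)"
    if "b < N" "b' < N" "b \<noteq> b'" for b b'
    using that orth reindex[of "\<lambda>g. v b g * v b' g"] by (simp flip: of_int_mult of_int_sum)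
  show "(\<Sum>a<N. of_int (v b (e a)) * of_int (v b (e a))) \<noteq> (0 :: complex)" if "b < N" for b
    using that nondeg reindex[of "\<lambda>g. v b g * v b g"] by (simp flip: of_int_mult of_int_sum)
qed (simp add: cay_adj_mat_def)

lemma integral_mat_if_char_poly_eq_prod:
  fixes A :: "complex mat" and \<mu> :: "nat \<Rightarrow> int"
  assumes "A \<in> carrier_mat N N" "char_poly A = (\<Prod>b<M. [:- of_int (\<mu> b), 1:])"
  shows "integral_mat A"
  unfolding integral_mat_def
proof (intro allI impI)
  fix x assume "eigenvalue A x"
  then have "poly (\<Prod>b<M. [:- of_int (\<mu> b), 1:]) x = 0"
    using assms by (simp add: eigenvalue_root_char_poly)
  then obtain b where "x = of_int (\<mu> b)"
    by (auto simp: poly_prod prod_zero_iff)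
  then show "x \<in> \<int>" by simp
qed

section \<open>The eigenvectors\<close>

text \<open>Cell \<open>c < 12\<close> stands for \<open>(i mod 4, j) = (c div 3, c mod 3)\<close>; the vertex
  \<open>(4q + c div 3, c mod 3)\<close> is the one in block \<open>q\<close> and cell \<open>c\<close>.\<close>

definition cell_rel :: "nat \<Rightarrow> nat \<Rightarrow> bool" where
  "cell_rel c d \<longleftrightarrow> cell_adj (c div 3) (c mod 3) (d div 3) (d mod 3)"

lemma cell_rel_if_same_residue: "c div 3 = d div 3 \<Longrightarrow> cell_rel c d"
  by (simp add: cell_rel_def cell_adj_def)

text \<open>The rows form a common orthogonal eigenbasis of the matrix of \<open>cell_rel\<close> and of the
  matrix of ``same \<open>i mod 4\<close>'' (i.e.\ \<open>I\<^sub>4 \<otimes> J\<^sub>3\<close>); the two lists after it hold the eigenvalues.\<close>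

definition cell_vecs :: "int list list" where
  "cell_vecs =
    [[1, 1, 1, 0, 0, 0, -1, -1, -1, 0, 0, 0],
     [1, -1, 0, 0, 0, 0, -1, 1, 0, 0, 0, 0],
     [1, 1, -2, 0, 0, 0, -1, -1, 2, 0, 0, 0],
     [0, 0, 0, 1, 1, 1, 0, 0, 0, -1, -1, -1],
     [0, 0, 0, 1, -1, 0, 0, 0, 0, -1, 1, 0],
     [0, 0, 0, 1, 1, -2, 0, 0, 0, -1, -1, 2],
     [1, 1, 1, 1, 1, 1, 1, 1, 1, 1, 1, 1],
     [1, 1, 1, -1, -1, -1, 1, 1, 1, -1, -1, -1],
     [1, -1, 0, 0, 1, -1, 1, -1, 0, 0, 1, -1],
     [1, 1, -2, -2, 1, 1, 1, 1, -2, -2, 1, 1],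
     [1, -1, 0, 0, -1, 1, 1, -1, 0, 0, -1, 1],
     [1, 1, -2, 2, -1, -1, 1, 1, -2, 2, -1, -1]]"

definition cell_rel_vals :: "int list" where
  "cell_rel_vals = [1, 1, 1, 1, 1, 1, 7, 3, 1, 1, -3, -3]"

definition cell_same_vals :: "int list" where
  "cell_same_vals = [3, 0, 0, 3, 0, 0, 3, 3, 0, 0, 0, 0]"

lemma cell_vecs_rel_eigen:
  assumes "c < 12" "d < 12"
  shows "(\<Sum>e<12. if cell_rel d e then cell_vecs ! c ! e else 0) = cell_rel_vals ! c * cell_vecs ! c ! d"
proof -
  have "list_all (\<lambda>c. list_all (\<lambda>d. sum_list (map (\<lambda>e. if cell_rel d e then cell_vecs ! c ! e else 0) [0..<12])
      = cell_rel_vals ! c * cell_vecs ! c ! d) [0..<12]) [0..<12]"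
    by code_simp
  then show ?thesis
    using assms by (simp add: list_all_iff interv_sum_list_conv_sum_set_nat lessThan_atLeast0)
qed

lemma cell_vecs_same_eigen:
  assumes "c < 12" "d < 12"
  shows "(\<Sum>e<12. if d div 3 = e div 3 then cell_vecs ! c ! e else 0) = cell_same_vals ! c * cell_vecs ! c ! d"
proof -
  have "list_all (\<lambda>c. list_all (\<lambda>d. sum_list (map (\<lambda>e. if d div 3 = e div 3 then cell_vecs ! c ! e else 0) [0..<12])
      = cell_same_vals ! c * cell_vecs ! c ! d) [0..<12]) [0..<12]"
    by code_simp
  then show ?thesis
    using assms by (simp add: list_all_iff interv_sum_list_conv_sum_set_nat lessThan_atLeast0)
qed

lemma cell_vecs_orthogonal:
  assumes "c < 12" "c' < 12"
  shows "(\<Sum>e<12. cell_vecs ! c ! e * cell_vecs ! c' ! e) = 0 \<longleftrightarrow> c \<noteq> c'"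
proof -
  have "list_all (\<lambda>c. list_all (\<lambda>c'. (sum_list (map (\<lambda>e. cell_vecs ! c ! e * cell_vecs ! c' ! e) [0..<12]) = 0)
      = (c \<noteq> c')) [0..<12]) [0..<12]"
    by code_simp
  then show ?thesis
    using assms by (simp add: list_all_iff interv_sum_list_conv_sum_set_nat lessThan_atLeast0)
qed

text \<open>The all-ones vector and the vectors \<open>(1, \<dots>, 1, -k, 0, \<dots>, 0)\<close> (\<open>k\<close> ones) form an orthogonal
  eigenbasis of \<open>J\<^sub>p\<close>.\<close>

definition block_vec :: "nat \<Rightarrow> nat \<Rightarrow> int" where
  "block_vec k q = (if k = 0 \<or> q < k then 1 else if q = k then - int k else 0)"

lemma block_vec_0 [simp]: "block_vec 0 q = 1"
  by (simp add: block_vec_def)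

lemma sum_block_vec:
  assumes "k < p"
  shows "(\<Sum>q<p. block_vec k q) = (if k = 0 then int p else 0)"
proof (cases "k = 0")
  case False
  have "{..<p} \<inter> {q. q < k} = {..<k}"
    using assms by auto
  then have ones: "(\<Sum>q<p. if q < k then 1 else 0) = int k"
    by (simp add: sum.If_cases)
  have "block_vec k q = (if q < k then 1 else 0) - (if q = k then int k else 0)" for q
    using False by (simp add: block_vec_def)
  then have "(\<Sum>q<p. block_vec k q) = (\<Sum>q<p. if q < k then 1 else 0) - (\<Sum>q<p. if q = k then int k else 0)"
    by (simp add: sum_subtractf)
  then show ?thesis
    using assms False ones by simp
qed (simp add: block_vec_def)

lemma block_vec_mult_block_vec:
  "k < k' \<Longrightarrow> block_vec k q * block_vec k' q = (if k = 0 then block_vec k' q else block_vec k q)"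
  by (auto simp: block_vec_def)

lemma block_vec_orthogonal:
  assumes "k < p" "k' < p" "k \<noteq> k'"
  shows "(\<Sum>q<p. block_vec k q * block_vec k' q) = 0"
proof -
  have "(\<Sum>q<p. block_vec k q * block_vec k' q) = 0" if "k < k'" "k' < p" for k k'
    using that by (cases "k = 0") (simp_all add: block_vec_mult_block_vec sum_block_vec)
  moreover have "(\<Sum>q<p. block_vec k q * block_vec k' q) = (\<Sum>q<p. block_vec k' q * block_vec k q)"
    by (simp add: mult.commute)
  ultimately show ?thesis
    using assms by (cases "k < k'") auto
qed

lemma block_vec_norm_pos:
  assumes "0 < p"
  shows "0 < (\<Sum>q<p. block_vec k q * block_vec k q)"
  using assms by (intro sum_pos2[of _ 0]) (auto simp: block_vec_def)

definition cell :: "nat \<times> nat \<Rightarrow> nat" where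
  "cell g = 3 * (fst g mod 4) + snd g"

lemma cell_vertex [simp]: "c < 12 \<Longrightarrow> cell (4 * q + c div 3, c mod 3) = c"
  by (simp add: cell_def)

lemma sum_U6n_carrier:
  assumes "n = 2 * p"
  shows "(\<Sum>g\<in>carrier (U6n n). f g) = (\<Sum>q<p. \<Sum>c<12. f (4 * q + c div 3, c mod 3))"
proof -
  have "bij_betw (\<lambda>(q, c). (4 * q + c div 3, c mod 3)) ({..<p} \<times> {..<12}) (carrier (U6n n))"
    by (rule bij_betw_byWitness[where f' = "\<lambda>g. (fst g div 4, cell g)"])
      (use assms in \<open>auto simp: U6n_carrier cell_def\<close>)
  then have "(\<Sum>g\<in>carrier (U6n n). f g) = (\<Sum>(q, c)\<in>{..<p} \<times> {..<12}. f (4 * q + c div 3, c mod 3))"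
    by (simp add: sum.reindex_bij_betw[symmetric] case_prod_beta)
  then show ?thesis
    by (simp add: sum.cartesian_product)
qed

lemma cay_adj_vertex_iff:
  assumes "even n" "g \<in> carrier (U6n n)" "4 * q + c div 3 < 2 * n" "c < 12"
  shows "cay_adj (U6n n) (conn_set n) g (4 * q + c div 3, c mod 3) \<longleftrightarrow>
    cell_rel (cell g) c \<and> \<not> (fst g div 4 = q \<and> cell g div 3 = c div 3)"
proof -
  obtain i j where g: "g = (i, j)" "i < 2 * n" "j < 3"
    using assms(2) by (cases g) (auto simp: U6n_carrier)
  have k: "(4 * q + c div 3) mod 4 = c div 3" "(4 * q + c div 3) div 4 = q"
    using \<open>c < 12\<close> by auto
  have "cay_adj (U6n n) (conn_set n) g (4 * q + c div 3, c mod 3) \<longleftrightarrow>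
      cell_adj (i mod 4) j (c div 3) (c mod 3) \<and> i \<noteq> 4 * q + c div 3"
    using cay_adj_conn_set_iff[OF assms(1), of i j "4 * q + c div 3" "c mod 3"] g assms(3) k(1) by simp
  moreover have "i \<noteq> 4 * q + c div 3 \<longleftrightarrow> \<not> (i div 4 = q \<and> i mod 4 = c div 3)"
    using k div_mult_mod_eq[of i 4] by (metis mult.commute)
  moreover have "cell g div 3 = i mod 4" "cell g mod 3 = j"
    using g by (auto simp: cell_def)
  ultimately show ?thesis
    using g by (simp add: cell_rel_def)
qed

definition U6n_eigvec :: "nat \<Rightarrow> nat \<times> nat \<Rightarrow> int" where
  "U6n_eigvec b g = block_vec (b div 12) (fst g div 4) * cell_vecs ! (b mod 12) ! cell g"

definition U6n_eigval :: "nat \<Rightarrow> nat \<Rightarrow> int" where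
  "U6n_eigval p b = (if b < 12 then int p * cell_rel_vals ! b else 0) - cell_same_vals ! (b mod 12)"

text \<open>The subtracted term removes the vertices with the same \<open>a\<close>-exponent as \<open>g\<close> (\<open>g\<close> itself
  included), which \<open>cell_rel\<close> does not exclude.\<close>

lemma U6n_eigvec_adj_term:
  assumes "n = 2 * p" "g \<in> carrier (U6n n)" "q' < p" "e < 12"
  shows "(if cay_adj (U6n n) (conn_set n) g (4 * q' + e div 3, e mod 3)
      then U6n_eigvec b (4 * q' + e div 3, e mod 3) else 0)
    = block_vec (b div 12) q' * (if cell_rel (cell g) e then cell_vecs ! (b mod 12) ! e else 0)
      - (if q' = fst g div 4
         then block_vec (b div 12) q' * (if cell g div 3 = e div 3 then cell_vecs ! (b mod 12) ! e else 0)
         else 0)"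
proof -
  have "even n" "4 * q' + e div 3 < 2 * n"
    using assms by auto
  then have adj: "cay_adj (U6n n) (conn_set n) g (4 * q' + e div 3, e mod 3) \<longleftrightarrow>
      cell_rel (cell g) e \<and> \<not> (fst g div 4 = q' \<and> cell g div 3 = e div 3)"
    using cay_adj_vertex_iff assms(2,4) by blast
  have vec: "U6n_eigvec b (4 * q' + e div 3, e mod 3) = block_vec (b div 12) q' * cell_vecs ! (b mod 12) ! e"
    using assms by (simp add: U6n_eigvec_def)
  show ?thesis
    using cell_rel_if_same_residue[of "cell g" e] unfolding adj vec by auto
qed

lemma U6n_eigvec_eigen:
  assumes "n = 2 * p" "g \<in> carrier (U6n n)" "b < 12 * p"
  shows "(\<Sum>h\<in>carrier (U6n n). if cay_adj (U6n n) (conn_set n) g h then U6n_eigvec b h else 0)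
    = U6n_eigval p b * U6n_eigvec b g"
proof -
  define k c d q where "k = b div 12" and "c = b mod 12" and "d = cell g" and "q = fst g div 4"
  have "fst g < 4 * p" "snd g < 3"
    using assms by (auto simp: U6n_carrier)
  then have "k < p" "c < 12" "d < 12" "q < p"
    using assms(3) by (simp_all add: k_def c_def d_def q_def cell_def less_mult_imp_div_less)
  define R where "R e = (if cell_rel d e then cell_vecs ! c ! e else 0)" for e
  define S where "S e = (if d div 3 = e div 3 then cell_vecs ! c ! e else 0)" for e
  have block_sum: "(\<Sum>e<12. block_vec k q' * R e - (if q' = q then block_vec k q' * S e else 0))
      = block_vec k q' * sum R {..<12} - (if q' = q then block_vec k q' * sum S {..<12} else 0)" for q'
    by (cases "q' = q") (simp_all add: sum_subtractf sum_distrib_left)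
  have "(\<Sum>h\<in>carrier (U6n n). if cay_adj (U6n n) (conn_set n) g h then U6n_eigvec b h else 0)
      = (\<Sum>q'<p. \<Sum>e<12. block_vec k q' * R e - (if q' = q then block_vec k q' * S e else 0))"
    unfolding sum_U6n_carrier[OF assms(1)] R_def S_def k_def c_def d_def q_def
    by (intro sum.cong refl) (simp add: U6n_eigvec_adj_term[OF assms(1,2)])
  also have "\<dots> = (\<Sum>q'<p. block_vec k q') * sum R {..<12} - block_vec k q * sum S {..<12}"
    using \<open>q < p\<close> by (simp only: block_sum) (simp add: sum_subtractf sum_distrib_right)
  also have "\<dots> = ((if k = 0 then int p * cell_rel_vals ! c else 0) - cell_same_vals ! c)
      * (block_vec k q * cell_vecs ! c ! d)"
    using \<open>k < p\<close> \<open>c < 12\<close> \<open>d < 12\<close>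
    by (simp add: R_def S_def cell_vecs_rel_eigen cell_vecs_same_eigen sum_block_vec algebra_simps)
  also have "\<dots> = U6n_eigval p b * U6n_eigvec b g"
    by (auto simp: U6n_eigval_def U6n_eigvec_def k_def c_def d_def q_def)
  finally show ?thesis .
qed

lemma U6n_eigvec_inner:
  assumes "n = 2 * p"
  shows "(\<Sum>g\<in>carrier (U6n n). U6n_eigvec b g * U6n_eigvec b' g)
    = (\<Sum>q<p. block_vec (b div 12) q * block_vec (b' div 12) q)
      * (\<Sum>e<12. cell_vecs ! (b mod 12) ! e * cell_vecs ! (b' mod 12) ! e)"
  unfolding sum_U6n_carrier[OF assms] sum_product
  by (intro sum.cong refl) (simp add: U6n_eigvec_def mult.assoc mult.left_commute)

lemma U6n_eigvec_orthogonal: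
  assumes "n = 2 * p" "b < 12 * p" "b' < 12 * p" "b \<noteq> b'"
  shows "(\<Sum>g\<in>carrier (U6n n). U6n_eigvec b g * U6n_eigvec b' g) = 0"
proof -
  have "b div 12 \<noteq> b' div 12 \<or> b mod 12 \<noteq> b' mod 12"
    using assms(4) by (metis div_mult_mod_eq)
  then show ?thesis
    using assms by (auto simp: U6n_eigvec_inner block_vec_orthogonal cell_vecs_orthogonal)
qed

lemma U6n_eigvec_nondegenerate:
  assumes "n = 2 * p" "b < 12 * p"
  shows "(\<Sum>g\<in>carrier (U6n n). U6n_eigvec b g * U6n_eigvec b g) \<noteq> 0"
  using assms block_vec_norm_pos[of p "b div 12"]
  by (simp add: U6n_eigvec_inner cell_vecs_orthogonal)

lemma char_poly_U6n:
  assumes "n = 2 * p" "bij_betw e {..<6 * n} (carrier (U6n n))"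
  shows "char_poly (cay_adj_mat (U6n n) (conn_set n) (6 * n) e)
    = (\<Prod>b<12 * p. [:- of_int (U6n_eigval p b), 1:])"
proof -
  have N: "6 * n = 12 * p" using assms by simp
  show ?thesis
    unfolding N
  proof (rule char_poly_cay_adj_mat_eq_prod[where v = U6n_eigvec])
    show "bij_betw e {..<12 * p} (carrier (U6n n))"
      using assms(2) N by simp
  qed (use U6n_eigvec_eigen[OF assms(1)] U6n_eigvec_orthogonal[OF assms(1)]
         U6n_eigvec_nondegenerate[OF assms(1)] in blast)+
qed

section \<open>The characteristic polynomial\<close>

lemma prod_lessThan_conv_prod_list: "(\<Prod>i<n. f i) = prod_list (map f [0..<n])"
  by (simp add: prod.distinct_set_conv_list[symmetric] lessThan_atLeast0)

lemma prod_U6n_eigval_first_block: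
  "(\<Prod>c<12. [:- of_int (U6n_eigval p c), 1:]) = ([:- of_nat p, 1:] ^ 6 * [:- (of_nat p - 3), 1:] ^ 2
    * [:- (3 * of_nat p - 3), 1:] * [:3 * of_nat p, 1:] ^ 2 * [:- (7 * of_nat p - 3), 1:] :: complex poly)"
proof -
  have regroup: "prod_list [d, a, a, d, a, a, f, g, a, a, h, h] = a ^ 6 * d ^ 2 * g * h ^ 2 * f"
    for a d f g h :: "complex poly"
    by (simp add: ac_simps eval_nat_numeral)
  have "map (\<lambda>c. [:- of_int (U6n_eigval p c), 1:]) [0..<12] =
    ([[:- (of_nat p - 3), 1:], [:- of_nat p, 1:], [:- of_nat p, 1:], [:- (of_nat p - 3), 1:],
      [:- of_nat p, 1:], [:- of_nat p, 1:], [:- (7 * of_nat p - 3), 1:], [:- (3 * of_nat p - 3), 1:],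
      [:- of_nat p, 1:], [:- of_nat p, 1:], [:3 * of_nat p, 1:], [:3 * of_nat p, 1:]] :: complex poly list)"
    by (simp add: upt_rec U6n_eigval_def cell_rel_vals_def cell_same_vals_def mult.commute)
  then show ?thesis
    unfolding prod_lessThan_conv_prod_list by (simp only: regroup)
qed

lemma prod_U6n_eigval_later_block:
  assumes "0 < k"
  shows "(\<Prod>c<12. [:- of_int (U6n_eigval p (12 * k + c)), 1:]) = ([:3, 1:] ^ 4 * [:0, 1:] ^ 8 :: complex poly)"
proof -
  have regroup: "prod_list [t, z, z, t, z, z, t, t, z, z, z, z] = t ^ 4 * z ^ 8" for t z :: "complex poly"
    by (simp add: ac_simps eval_nat_numeral)
  have shift: "(\<Prod>c<12. [:- of_int (U6n_eigval p (12 * k + c)), 1:])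
      = (\<Prod>c<12. [:of_int (cell_same_vals ! c), 1:] :: complex poly)"
  proof (intro prod.cong refl)
    fix c assume "c \<in> {..<12::nat}"
    then have "(12 * k + c) mod 12 = c" "\<not> 12 * k + c < 12"
      using assms by auto
    then show "[:- of_int (U6n_eigval p (12 * k + c)), 1:] = [:of_int (cell_same_vals ! c), 1:]"
      by (simp add: U6n_eigval_def)
  qed
  have entries: "map (\<lambda>c. [:of_int (cell_same_vals ! c), 1:]) [0..<12] =
    ([[:3, 1:], [:0, 1:], [:0, 1:], [:3, 1:], [:0, 1:], [:0, 1:],
      [:3, 1:], [:3, 1:], [:0, 1:], [:0, 1:], [:0, 1:], [:0, 1:]] :: complex poly list)"
    by (simp add: upt_rec cell_same_vals_def)
  show ?thesis
    unfolding shift unfolding prod_lessThan_conv_prod_list entries by (rule regroup)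
qed

lemma prod_U6n_eigval:
  assumes "0 < p"
  shows "(\<Prod>b<12 * p. [:- of_int (U6n_eigval p b), 1:]) =
    ([:3, 1:] ^ (4 * p - 4) * [:0, 1:] ^ (8 * p - 8) * [:- of_nat p, 1:] ^ 6
    * [:- (of_nat p - 3), 1:] ^ 2 * [:- (3 * of_nat p - 3), 1:]
    * [:3 * of_nat p, 1:] ^ 2 * [:- (7 * of_nat p - 3), 1:] :: complex poly)"
proof -
  define f where "f b = ([:- of_int (U6n_eigval p b), 1:] :: complex poly)" for b
  define G where "G k = (\<Prod>c<12. f (12 * k + c))" for k
  obtain m where m: "p = Suc m" using assms by (cases p) auto
  have block: "prod f {k * 12..<k * 12 + 12} = G k" for k
    using prod.shift_bounds_nat_ivl[of f 0 "k * 12" 12] by (simp add: G_def lessThan_atLeast0 ac_simps)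
  have "(\<Prod>b<12 * p. f b) = (\<Prod>k<Suc m. G k)"
    using prod.nat_group[of f 12 p] m by (simp only: block mult.commute)
  also have "\<dots> = G 0 * ([:3, 1:] ^ 4 * [:0, 1:] ^ 8) ^ m"
  proof -
    have "G (Suc k) = [:3, 1:] ^ 4 * [:0, 1:] ^ 8" for k
      unfolding G_def f_def by (rule prod_U6n_eigval_later_block) simp
    then show ?thesis
      unfolding prod.lessThan_Suc_shift by simp
  qed
  also have "\<dots> = G 0 * ([:3, 1:] ^ (4 * p - 4) * [:0, 1:] ^ (8 * p - 8))"
  proof -
    have "4 * p - 4 = 4 * m" "8 * p - 8 = 8 * m" using m by simp_all
    then show ?thesis by (simp only: power_mult_distrib power_mult)
  qed
  finally have "(\<Prod>b<12 * p. f b) = G 0 * ([:3, 1:] ^ (4 * p - 4) * [:0, 1:] ^ (8 * p - 8))" .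
  moreover have "G 0 = [:- of_nat p, 1:] ^ 6 * [:- (of_nat p - 3), 1:] ^ 2
      * [:- (3 * of_nat p - 3), 1:] * [:3 * of_nat p, 1:] ^ 2 * [:- (7 * of_nat p - 3), 1:]"
    by (simp only: G_def f_def mult_0_right add_0 prod_U6n_eigval_first_block)
  ultimately show ?thesis
    unfolding f_def by (simp only: ac_simps)
qed

theorem corollary3p3:
  fixes p :: nat and n :: nat
  assumes "p > 2" and "n = 2 * p"
  shows "cay_connected (U6n n) (S1 n \<union> S2 n)
       \<and> (\<forall>e. bij_betw e {..<6 * n} (carrier (U6n n)) \<longrightarrow>
            integral_mat (cay_adj_mat (U6n n) (S1 n \<union> S2 n) (6 * n) e)
          \<and> char_poly (cay_adj_mat (U6n n) (S1 n \<union> S2 n) (6 * n) e) =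
              [:3, 1:] ^ (4 * p - 4) * [:0, 1:] ^ (8 * p - 8) * [:- of_nat p, 1:] ^ 6
              * [:- (of_nat p - 3), 1:] ^ 2 * [:- (3 * of_nat p - 3), 1:]
              * [:3 * of_nat p, 1:] ^ 2 * [:- (7 * of_nat p - 3), 1:])"
proof -
  have n: "even n" "2 < n" and p: "1 < p"
    using assms by auto
  have "integral_mat (cay_adj_mat (U6n n) (conn_set n) (6 * n) e)
      \<and> char_poly (cay_adj_mat (U6n n) (conn_set n) (6 * n) e) =
          [:3, 1:] ^ (4 * p - 4) * [:0, 1:] ^ (8 * p - 8) * [:- of_nat p, 1:] ^ 6
          * [:- (of_nat p - 3), 1:] ^ 2 * [:- (3 * of_nat p - 3), 1:]
          * [:3 * of_nat p, 1:] ^ 2 * [:- (7 * of_nat p - 3), 1:]"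
      (is "_ \<and> ?char_poly = ?factored")
    if "bij_betw e {..<6 * n} (carrier (U6n n))" for e
  proof
    show "integral_mat (cay_adj_mat (U6n n) (conn_set n) (6 * n) e)"
      using char_poly_U6n[OF assms(2) that]
      by (rule integral_mat_if_char_poly_eq_prod[where N = "6 * n", rotated]) (simp add: cay_adj_mat_def)
    show "?char_poly = ?factored"
      using p by (subst char_poly_U6n[OF assms(2) that]) (rule prod_U6n_eigval, simp)
  qed
  then show ?thesis
    unfolding S1_Un_S2_eq_conn_set[OF n] using cay_connected_conn_set[OF n] by blast
qed

end
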